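(* Let $P$ be a program. $[\![P]\!]_{\mathrm{GC}}$ is pointer-race-free if and only if there is no computation $\sigma_1.\mathit{act}_1.\sigma_2.\mathit{act}_2\in[\![P]\!]_{\mathrm{GC}}$ satisfying all of the following: - the command of $\mathit{act}_1$ is $\mathtt{free}(x)$ with $h_{\sigma_1}(x)=a\neq\mathtt{seg}$; - the command of $\mathit{act}_2$ accesses $y.\mathtt{next}$ or $y.\mathtt{data}$, or is $\mathtt{free}(y)$, or is an assertion mentioning $y$, for some pointer variable $y$; - $h_{\sigma_1.\mathit{act}_1.\sigma_2}(y)=a$.
   Context: Programs. Programs are sets of threads (while-programs) over pointer variables $\mathit{PVar}$ and data variables $\mathit{DVar}$. The commands are: - $\mathtt{assert}\ c$, with $c::=x=y\mid u=v\mid\neg c$ and complementary asserts at each location; - $x:=\mathtt{malloc}$; - $\mathtt{free}(x)$; - $y:=x.\mathtt{next}$, $x.\mathtt{next}:=y$, $x:=y$; - $u:=x.\mathtt{data}$, $x.\mathtt{data}:=u$; - $u:=\mathit{op}(\dots)$. Heaps. A heap is $h=(\mathit{pval},\mathit{dval})$ with partial maps from $\mathit{PExp}=\mathit{PVar}\cup\{a.\mathtt{next}_i\}$ to $\mathit{Adr}\ni\mathtt{seg}$, and from $\mathit{DExp}=\mathit{DVar}\cup\{a.\mathtt{data}\}$ to data. $h_\sigma$ is the heap after $\sigma$ and $\mathrm{adr}(h)$ the set of addresses occurring in $h$. Garbage-collected semantics $[\![P]\!]_{\mathrm{GC}}$. Initially pointer variables are $\mathtt{seg}$. The rules are: - Assignments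 behave as usual; selector access through $x$ needs $h_\sigma(x)\neq\mathtt{seg}$. - Asserts pass if they hold or a compared pointer is $\mathtt{seg}$. - $\mathtt{free}$ has no update. - Malloc returns a never-used address $a\notin\mathrm{adr}(h_\sigma)$, with $a.\mathtt{data}$ arbitrary and $a.\mathtt{next}_i\mapsto\mathtt{seg}$. Valid pointers. The set $\mathrm{valid}(\sigma)\subseteq\mathit{PExp}$ is all of $\mathit{PExp}$ initially. For each command: - malloc into $x$ adds $x$; - $\mathtt{free}(x)$ with $h_\sigma(x)=a\neq\mathtt{seg}$ removes all $e$ with $h_\sigma(e)=a$ and all $a.\mathtt{next}_i$; - $x:=y$ makes $x$ valid iff $y$ is valid; - $x.\mathtt{next}:=y$ with $h_\sigma(x)=a$ makes $a.\mathtt{next}$ valid iff $y$ is valid; - $y:=x.\mathtt{next}$ with $h_\sigma(x)=a$ makes $y$ valid iff $x$ and $a.\mathtt{next}$ are valid. Pointer race. A pointer race is an action executing $\mathtt{free}(x)$, reading/writing $x.\mathtt{next}$ or $x.\mathtt{data}$, or an assertion mentioning pointer variable $x$, with $x$ not valid before the action. A set is PRF if none of its computations has a prefix that is a pointer race. *)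

theory Defs
  imports Main
begin

text \<open>Addresses: the distinguished value seg and ordinary addresses (an infinite supply,
  indexed by nat).  Selectors next_i are indexed by nat.\<close>
datatype adr = Seg | Adr nat

datatype 'p pexp = PV 'p | Nxt nat nat  \<comment> \<open>Nxt a i  is  a.next_i\<close>
datatype 'd dexp = DV 'd | Dat nat

datatype ('p, 'd) cond = PEq 'p 'p | DEq 'd 'd | Neg "('p, 'd) cond"

datatype ('p, 'd, 'v) cmd =
    Assert "('p, 'd) cond"
  | Malloc 'p
  | Free 'p
  | RdNext 'p 'p nat          \<comment> \<open>RdNext y x i :  y := x.next_i\<close>
  | WrNext 'p nat 'p          \<comment> \<open>WrNext x i y :  x.next_i := y\<close>
  | Asgn 'p 'p                \<comment> \<open>Asgn x y :  x := y\<close>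
  | RdData 'd 'p              \<comment> \<open>RdData u x :  u := x.data\<close>
  | WrData 'p 'd              \<comment> \<open>WrData x u :  x.data := u\<close>
  | Op 'd "'v option list \<Rightarrow> 'v" "'d list"  \<comment> \<open>u := op(u1,...,un)\<close>

fun cpvars :: "('p, 'd) cond \<Rightarrow> 'p set" where
  "cpvars (PEq x y) = {x, y}"
| "cpvars (DEq u v) = {}"
| "cpvars (Neg c) = cpvars c"

text \<open>A program: a set of threads (type 't), each given as a control-flow graph (while-program)
  over locations 'l with an initial location; edges are (thread, source, command, target).\<close>
record ('t, 'l, 'p, 'd, 'v) program =
  init  :: "'t \<Rightarrow> 'l"
  edges :: "('t \<times> 'l \<times> ('p, 'd, 'v) cmd \<times> 'l) set"

definition wf_program :: "('t, 'l, 'p, 'd, 'v) program \<Rightarrow> bool" where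
  "wf_program P \<longleftrightarrow>
     (\<forall>t l c l'. (t, l, Assert c, l') \<in> edges P \<longrightarrow> (\<exists>l''. (t, l, Assert (Neg c), l'') \<in> edges P))"

record ('p, 'd, 'v) heap =
  pval :: "'p pexp \<rightharpoonup> adr"
  dval :: "'d dexp \<rightharpoonup> 'v"

definition adrs :: "('p, 'd, 'v) heap \<Rightarrow> nat set" where
  "adrs h = {a. \<exists>e. pval h e = Some (Adr a)} \<union> {a. \<exists>i. pval h (Nxt a i) \<noteq> None}
            \<union> {a. dval h (Dat a) \<noteq> None}"

definition heap0 :: "('p, 'd, 'v) heap" where
  "heap0 = \<lparr>pval = (\<lambda>e. case e of PV x \<Rightarrow> Some Seg | Nxt a i \<Rightarrow> None), dval = Map.empty\<rparr>"

text \<open>An action: executing thread, source location, command, target location, and the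
  nondeterministic choice of a malloc (fresh address and initial data value).\<close>
datatype ('t, 'l, 'p, 'd, 'v) action =
  Act (thr: 't) (src: 'l) (acmd: "('p, 'd, 'v) cmd") (dst: 'l) (choice: "(nat \<times> 'v) option")

fun holds :: "('p, 'd, 'v) heap \<Rightarrow> ('p, 'd) cond \<Rightarrow> bool" where
  "holds h (PEq x y) = (pval h (PV x) = pval h (PV y))"
| "holds h (DEq u v) = (dval h (DV u) = dval h (DV v))"
| "holds h (Neg c) = (\<not> holds h c)"

definition passes :: "('p, 'd, 'v) heap \<Rightarrow> ('p, 'd) cond \<Rightarrow> bool" where
  "passes h c \<longleftrightarrow> holds h c \<or> (\<exists>x\<in>cpvars c. pval h (PV x) = Some Seg)"

fun enabled_cmd :: "('p, 'd, 'v) heap \<Rightarrow> ('p, 'd, 'v) cmd \<Rightarrow> (nat \<times> 'v) option \<Rightarrow> bool" where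
  "enabled_cmd h (Malloc x) ch = (\<exists>a v. ch = Some (a, v) \<and> a \<notin> adrs h)"
| "enabled_cmd h (Assert c) ch = (ch = None \<and> passes h c)"
| "enabled_cmd h (Free x) ch = (ch = None)"
| "enabled_cmd h (RdNext y x i) ch = (ch = None \<and> pval h (PV x) \<noteq> Some Seg)"
| "enabled_cmd h (WrNext x i y) ch = (ch = None \<and> pval h (PV x) \<noteq> Some Seg)"
| "enabled_cmd h (Asgn x y) ch = (ch = None)"
| "enabled_cmd h (RdData u x) ch = (ch = None \<and> pval h (PV x) \<noteq> Some Seg)"
| "enabled_cmd h (WrData x u) ch = (ch = None \<and> pval h (PV x) \<noteq> Some Seg)"
| "enabled_cmd h (Op u f us) ch = (ch = None)"

fun step_cmd :: "('p, 'd, 'v) heap \<Rightarrow> ('p, 'd, 'v) cmd \<Rightarrow> (nat \<times> 'v) option \<Rightarrow> ('p, 'd, 'v) heap" where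
  "step_cmd h (Malloc x) ch = (case ch of
      Some (a, v) \<Rightarrow> h\<lparr>pval := (\<lambda>e. case e of
                                   PV z \<Rightarrow> if z = x then Some (Adr a) else pval h e
                                 | Nxt b i \<Rightarrow> if b = a then Some Seg else pval h e),
                       dval := (dval h)(Dat a \<mapsto> v)\<rparr>
    | None \<Rightarrow> h)"
| "step_cmd h (Assert c) ch = h"
| "step_cmd h (Free x) ch = h"
| "step_cmd h (RdNext y x i) ch = (case pval h (PV x) of
      Some (Adr a) \<Rightarrow> h\<lparr>pval := (pval h)(PV y := pval h (Nxt a i))\<rparr> | _ \<Rightarrow> h)"
| "step_cmd h (WrNext x i y) ch = (case pval h (PV x) of
      Some (Adr a) \<Rightarrow> h\<lparr>pval := (pval h)(Nxt a i := pval h (PV y))\<rparr> | _ \<Rightarrow> h)"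
| "step_cmd h (Asgn x y) ch = h\<lparr>pval := (pval h)(PV x := pval h (PV y))\<rparr>"
| "step_cmd h (RdData u x) ch = (case pval h (PV x) of
      Some (Adr a) \<Rightarrow> h\<lparr>dval := (dval h)(DV u := dval h (Dat a))\<rparr> | _ \<Rightarrow> h)"
| "step_cmd h (WrData x u) ch = (case pval h (PV x) of
      Some (Adr a) \<Rightarrow> h\<lparr>dval := (dval h)(Dat a := dval h (DV u))\<rparr> | _ \<Rightarrow> h)"
| "step_cmd h (Op u f us) ch = h\<lparr>dval := (dval h)(DV u \<mapsto> f (map (\<lambda>w. dval h (DV w)) us))\<rparr>"

definition step :: "('p, 'd, 'v) heap \<Rightarrow> ('t, 'l, 'p, 'd, 'v) action \<Rightarrow> ('p, 'd, 'v) heap" where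
  "step h act = step_cmd h (acmd act) (choice act)"

definition heap_of :: "('t, 'l, 'p, 'd, 'v) action list \<Rightarrow> ('p, 'd, 'v) heap" where
  "heap_of \<sigma> = foldl step heap0 \<sigma>"

fun gc_run :: "('t, 'l, 'p, 'd, 'v) program \<Rightarrow> ('t \<Rightarrow> 'l) \<Rightarrow> ('p, 'd, 'v) heap
                 \<Rightarrow> ('t, 'l, 'p, 'd, 'v) action list \<Rightarrow> bool" where
  "gc_run P pc h [] = True"
| "gc_run P pc h (act # \<sigma>) =
     (pc (thr act) = src act \<and> (thr act, src act, acmd act, dst act) \<in> edges P
      \<and> enabled_cmd h (acmd act) (choice act)
      \<and> gc_run P (pc(thr act := dst act)) (step h act) \<sigma>)"

definition sem_gc :: "('t, 'l, 'p, 'd, 'v) program \<Rightarrow> ('t, 'l, 'p, 'd, 'v) action list set" where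
  "sem_gc P = {\<sigma>. gc_run P (init P) heap0 \<sigma>}"

fun vstep_cmd :: "('p, 'd, 'v) heap \<Rightarrow> 'p pexp set \<Rightarrow> ('p, 'd, 'v) cmd \<Rightarrow> 'p pexp set" where
  "vstep_cmd h V (Malloc x) = insert (PV x) V"
| "vstep_cmd h V (Free x) = (case pval h (PV x) of
      Some (Adr a) \<Rightarrow> V - ({e. pval h e = Some (Adr a)} \<union> {Nxt a i | i. True}) | _ \<Rightarrow> V)"
| "vstep_cmd h V (Asgn x y) = (if PV y \<in> V then insert (PV x) V else V - {PV x})"
| "vstep_cmd h V (WrNext x i y) = (case pval h (PV x) of
      Some (Adr a) \<Rightarrow> (if PV y \<in> V then insert (Nxt a i) V else V - {Nxt a i}) | _ \<Rightarrow> V)"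
| "vstep_cmd h V (RdNext y x i) = (case pval h (PV x) of
      Some (Adr a) \<Rightarrow> (if PV x \<in> V \<and> Nxt a i \<in> V then insert (PV y) V else V - {PV y}) | _ \<Rightarrow> V)"
| "vstep_cmd h V (Assert c) = V"
| "vstep_cmd h V (RdData u x) = V"
| "vstep_cmd h V (WrData x u) = V"
| "vstep_cmd h V (Op u f us) = V"

definition valid :: "('t, 'l, 'p, 'd, 'v) action list \<Rightarrow> 'p pexp set" where
  "valid \<sigma> = snd (foldl (\<lambda>(h, V) act. (step h act, vstep_cmd h V (acmd act))) (heap0, UNIV) \<sigma>)"

fun race_vars :: "('p, 'd, 'v) cmd \<Rightarrow> 'p set" where
  "race_vars (Free x) = {x}"
| "race_vars (RdNext y x i) = {x}"
| "race_vars (WrNext x i y) = {x}"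
| "race_vars (RdData u x) = {x}"
| "race_vars (WrData x u) = {x}"
| "race_vars (Assert c) = cpvars c"
| "race_vars (Malloc x) = {}"
| "race_vars (Asgn x y) = {}"
| "race_vars (Op u f us) = {}"

definition pointer_race :: "('t, 'l, 'p, 'd, 'v) action list \<Rightarrow> ('t, 'l, 'p, 'd, 'v) action \<Rightarrow> bool" where
  "pointer_race \<sigma> act \<longleftrightarrow> (\<exists>x \<in> race_vars (acmd act). PV x \<notin> valid \<sigma>)"

definition PRF :: "('t, 'l, 'p, 'd, 'v) action list set \<Rightarrow> bool" where
  "PRF S \<longleftrightarrow> (\<forall>\<sigma>\<in>S. \<forall>\<tau> act. (\<exists>\<rho>. \<sigma> = \<tau> @ [act] @ \<rho>) \<longrightarrow> \<not> pointer_race \<tau> act)"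

end

(*
  Under garbage collection free does not deallocate, so a freed address is never handed out
  again by malloc; and free invalidates every expression referring to the freed cell, while
  validity afterwards only spreads by copying from valid expressions. Hence a valid expression
  never holds a freed address, and any access through a reference to a freed cell is a race.
  Conversely, along a race-free computation invalidity only arises from free and is only
  propagated by copying, so every invalid expression dangles: it is a next-field of a freed
  cell or holds a freed address. At the first race of a computation the racing variable is
  invalid, hence holds a freed address, which yields the free and the later access.
*)

theory Submission
  imports Defs
begin

lemma fst_foldl_step_valid:
  "fst (foldl (\<lambda>(h, V) act. (step h act, vstep_cmd h V (acmd act))) (h, V) \<tau>) = foldl step h \<tau>"
  by (induction \<tau> arbitrary: h V) auto

lemma heap_of_Nil [simp]: "heap_of [] = heap0"
  by (simp add: heap_of_def)

lemma heap_of_snoc [simp]: "heap_of (\<tau> @ [act]) = step (heap_of \<tau>) act"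
  by (simp add: heap_of_def)

lemma valid_Nil [simp]: "valid [] = UNIV"
  by (simp add: valid_def)

lemma valid_snoc [simp]: "valid (\<tau> @ [act]) = vstep_cmd (heap_of \<tau>) (valid \<tau>) (acmd act)"
proof -
  let ?f = "\<lambda>(h, V) act. (step h act, vstep_cmd h V (acmd act))"
  have fold: "foldl ?f (heap0, UNIV) \<tau> = (heap_of \<tau>, valid \<tau>)"
    using fst_foldl_step_valid[of heap0 UNIV \<tau>] by (simp add: heap_of_def valid_def prod_eq_iff)
  have "valid (\<tau> @ [act]) = snd (?f (foldl ?f (heap0, UNIV) \<tau>) act)"
    by (simp add: valid_def)
  also have "\<dots> = vstep_cmd (heap_of \<tau>) (valid \<tau>) (acmd act)"
    by (simp add: fold)
  finally show ?thesis .
qed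

lemma gc_run_appendD: "gc_run P pc h (\<tau> @ \<rho>) \<Longrightarrow> gc_run P pc h \<tau>"
  by (induction \<tau> arbitrary: pc h) auto

lemma gc_run_snoc_enabled:
  "gc_run P pc h (\<tau> @ [act]) \<Longrightarrow> enabled_cmd (foldl step h \<tau>) (acmd act) (choice act)"
  by (induction \<tau> arbitrary: pc h) auto

lemma sem_gc_appendD: "\<tau> @ \<rho> \<in> sem_gc P \<Longrightarrow> \<tau> \<in> sem_gc P"
  by (auto simp: sem_gc_def dest: gc_run_appendD)

lemma sem_gc_snoc_enabled:
  "\<tau> @ [act] \<in> sem_gc P \<Longrightarrow> enabled_cmd (heap_of \<tau>) (acmd act) (choice act)"
  by (auto simp: sem_gc_def heap_of_def dest: gc_run_snoc_enabled)

definition wf_heap :: "('p, 'd, 'v) heap \<Rightarrow> bool" where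
  "wf_heap h \<longleftrightarrow> (\<forall>x. pval h (PV x) \<noteq> None)
     \<and> (\<forall>e a i. pval h e = Some (Adr a) \<longrightarrow> pval h (Nxt a i) \<noteq> None)"

lemma in_adrsI:
  "pval h e = Some (Adr a) \<Longrightarrow> a \<in> adrs h"
  "pval h (Nxt a i) \<noteq> None \<Longrightarrow> a \<in> adrs h"
  by (auto simp: adrs_def)

lemma wf_heap_heap0: "wf_heap heap0"
  by (auto simp: wf_heap_def heap0_def split: pexp.splits)

lemma wf_heap_step:
  "wf_heap h \<Longrightarrow> enabled_cmd h (acmd act) (choice act) \<Longrightarrow> wf_heap (step h act)"
  by (cases "acmd act")
    (auto simp: wf_heap_def step_def split: option.splits adr.splits pexp.splits if_splits
      dest: in_adrsI)

lemma wf_heap_sem_gc: "\<tau> \<in> sem_gc P \<Longrightarrow> wf_heap (heap_of \<tau>)"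
proof (induction \<tau> rule: rev_induct)
  case (snoc act \<tau>)
  then show ?case
    using sem_gc_appendD[of \<tau> "[act]"] sem_gc_snoc_enabled[of \<tau> act] wf_heap_step by auto
qed (simp add: wf_heap_heap0)

lemma step_next_defined:
  "wf_heap h \<Longrightarrow> pval h (Nxt a i) \<noteq> None \<Longrightarrow> pval (step h act) (Nxt a i) \<noteq> None"
  by (cases "acmd act")
    (auto simp: wf_heap_def step_def split: option.splits adr.splits pexp.splits if_splits)

definition freed :: "('t, 'l, 'p, 'd, 'v) action list \<Rightarrow> nat \<Rightarrow> bool" where
  "freed \<tau> a \<longleftrightarrow> (\<exists>\<sigma>1 act1 \<sigma>2 x. \<tau> = \<sigma>1 @ [act1] @ \<sigma>2 \<and> acmd act1 = Free x
       \<and> pval (heap_of \<sigma>1) (PV x) = Some (Adr a))"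

lemma not_freed_Nil [simp]: "\<not> freed [] a"
  by (simp add: freed_def)

lemma freed_snoc:
  "freed (\<tau> @ [act]) a \<longleftrightarrow>
     freed \<tau> a \<or> (\<exists>x. acmd act = Free x \<and> pval (heap_of \<tau>) (PV x) = Some (Adr a))"
proof
  assume "freed (\<tau> @ [act]) a"
  then obtain \<sigma>1 act1 \<sigma>2 x where split: "\<tau> @ [act] = \<sigma>1 @ [act1] @ \<sigma>2"
    and free: "acmd act1 = Free x" "pval (heap_of \<sigma>1) (PV x) = Some (Adr a)"
    by (auto simp: freed_def)
  show "freed \<tau> a \<or> (\<exists>x. acmd act = Free x \<and> pval (heap_of \<tau>) (PV x) = Some (Adr a))"
  proof (cases \<sigma>2 rule: rev_cases)
    case Nil
    then show ?thesis using split free by auto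
  next
    case (snoc \<rho> _)
    then have "\<tau> = \<sigma>1 @ [act1] @ \<rho>" using split by auto
    then show ?thesis using free unfolding freed_def by blast
  qed
next
  assume "freed \<tau> a \<or> (\<exists>x. acmd act = Free x \<and> pval (heap_of \<tau>) (PV x) = Some (Adr a))"
  then show "freed (\<tau> @ [act]) a"
    unfolding freed_def by (metis append.assoc append_Cons append_Nil)
qed

text \<open>In the garbage-collected semantics free has no effect on the heap, so a freed cell keeps
  its next-fields and malloc never hands out its address again.\<close>

lemma freed_in_adrs:
  assumes "\<tau> \<in> sem_gc P" "freed \<tau> a"
  shows "a \<in> adrs (heap_of \<tau>)"
proof -
  have "pval (heap_of \<tau>) (Nxt a 0) \<noteq> None"
    using assms
  proof (induction \<tau> rule: rev_induct)
    case (snoc act \<tau>)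
    have run: "\<tau> \<in> sem_gc P" using snoc.prems sem_gc_appendD by blast
    have "pval (heap_of \<tau>) (Nxt a 0) \<noteq> None"
    proof (cases "freed \<tau> a")
      case True
      then show ?thesis using snoc.IH run by blast
    next
      case False
      then obtain x where "pval (heap_of \<tau>) (PV x) = Some (Adr a)"
        using snoc.prems(2) freed_snoc by blast
      then show ?thesis using wf_heap_sem_gc[OF run] unfolding wf_heap_def by blast
    qed
    then show ?case using step_next_defined wf_heap_sem_gc[OF run] by simp
  qed simp
  then show ?thesis by (rule in_adrsI)
qed

lemma valid_not_freed:
  "\<tau> \<in> sem_gc P \<Longrightarrow> e \<in> valid \<tau> \<Longrightarrow> freed \<tau> a \<Longrightarrow> pval (heap_of \<tau>) e \<noteq> Some (Adr a)"
proof (induction \<tau> arbitrary: e rule: rev_induct)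
  case (snoc act \<tau>)
  have run: "\<tau> \<in> sem_gc P" using snoc.prems sem_gc_appendD by blast
  have enabled: "enabled_cmd (heap_of \<tau>) (acmd act) (choice act)"
    using snoc.prems sem_gc_snoc_enabled by blast
  note IH = snoc.IH[OF run]
  show ?case
  proof (cases "acmd act")
    case (Malloc x)
    then show ?thesis using snoc.prems IH enabled freed_in_adrs[OF run] freed_snoc[of \<tau> act a]
      by (auto simp: step_def split: option.splits adr.splits pexp.splits if_splits)
  qed (use snoc.prems IH freed_snoc[of \<tau> act a] in
        \<open>auto simp: step_def split: option.splits adr.splits pexp.splits if_splits\<close>)
qed simp

definition race_free :: "('t, 'l, 'p, 'd, 'v) action list \<Rightarrow> bool" where
  "race_free \<sigma> \<longleftrightarrow> (\<forall>\<tau> act \<rho>. \<sigma> = \<tau> @ [act] @ \<rho> \<longrightarrow> \<not> pointer_race \<tau> act)"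

lemma PRF_iff_race_free: "PRF S \<longleftrightarrow> (\<forall>\<sigma>\<in>S. race_free \<sigma>)"
  by (auto simp: PRF_def race_free_def)

lemma race_free_Nil [simp]: "race_free []"
  by (simp add: race_free_def)

lemma race_free_snoc [simp]:
  "race_free (\<sigma> @ [act]) \<longleftrightarrow> race_free \<sigma> \<and> \<not> pointer_race \<sigma> act"
proof
  assume rf: "race_free (\<sigma> @ [act])"
  show "race_free \<sigma> \<and> \<not> pointer_race \<sigma> act"
  proof
    show "race_free \<sigma>"
      unfolding race_free_def
      using rf[unfolded race_free_def, rule_format, of _ _ "_ @ [act]"] by auto
    show "\<not> pointer_race \<sigma> act" using rf by (simp add: race_free_def)
  qed
next
  assume rf: "race_free \<sigma> \<and> \<not> pointer_race \<sigma> act"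
  show "race_free (\<sigma> @ [act])"
    unfolding race_free_def
  proof (intro allI impI)
    fix \<tau> act' \<rho> assume split: "\<sigma> @ [act] = \<tau> @ [act'] @ \<rho>"
    show "\<not> pointer_race \<tau> act'"
    proof (cases \<rho> rule: rev_cases)
      case Nil
      then show ?thesis using split rf by simp
    next
      case (snoc \<rho>' _)
      then have "\<sigma> = \<tau> @ [act'] @ \<rho>'" using split by simp
      then show ?thesis using rf by (simp add: race_free_def)
    qed
  qed
qed

lemma first_race:
  assumes "\<not> race_free \<sigma>"
  obtains \<tau> act \<rho> where "\<sigma> = \<tau> @ [act] @ \<rho>" "pointer_race \<tau> act" "race_free \<tau>"
  using assms
proof (induction \<sigma> arbitrary: thesis rule: rev_induct)
  case (snoc act' \<sigma>)
  show ?case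
  proof (cases "race_free \<sigma>")
    case True
    then show ?thesis using snoc.prems by auto
  next
    case False
    then show ?thesis using snoc by (metis append.assoc)
  qed
qed simp

section \<open>Invalid pointers dangle\<close>

definition dangling :: "('t, 'l, 'p, 'd, 'v) action list \<Rightarrow> 'p pexp \<Rightarrow> bool" where
  "dangling \<tau> e \<longleftrightarrow> (\<exists>b i. e = Nxt b i \<and> freed \<tau> b)
     \<or> (\<exists>a. pval (heap_of \<tau>) e = Some (Adr a) \<and> freed \<tau> a)"

lemma dangling_snoc_unchanged:
  "pval (heap_of (\<tau> @ [act])) e = pval (heap_of \<tau>) e \<Longrightarrow> dangling \<tau> e \<Longrightarrow> dangling (\<tau> @ [act]) e"
  by (auto simp: dangling_def freed_snoc simp del: heap_of_snoc)

lemma dangling_snoc_copy: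
  "pval (heap_of (\<tau> @ [act])) e = pval (heap_of \<tau>) e' \<Longrightarrow> dangling \<tau> e'
    \<Longrightarrow> \<not> (\<exists>b i. e' = Nxt b i \<and> freed \<tau> b) \<Longrightarrow> dangling (\<tau> @ [act]) e"
  by (auto simp: dangling_def freed_snoc simp del: heap_of_snoc)

lemma wf_heap_deref_Adr:
  assumes "wf_heap h" "pval h (PV x) \<noteq> Some Seg"
  obtains c where "pval h (PV x) = Some (Adr c)"
  using assms unfolding wf_heap_def by (metis adr.exhaust option.exhaust)

lemma dangling_snoc_Free:
  assumes free: "acmd act = Free x"
    and IH: "\<And>e. e \<notin> valid \<tau> \<Longrightarrow> dangling \<tau> e"
    and invalid: "e \<notin> valid (\<tau> @ [act])"
  shows "dangling (\<tau> @ [act]) e"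
proof (cases "e \<in> valid \<tau>")
  case True
  then show ?thesis using invalid free
    by (auto simp: dangling_def freed_snoc step_def split: option.splits adr.splits)
next
  case False
  then show ?thesis using free IH dangling_snoc_unchanged[of \<tau> act e] by (simp add: step_def)
qed

lemma dangling_snoc_Malloc:
  assumes run: "\<tau> @ [act] \<in> sem_gc P" and malloc: "acmd act = Malloc x"
    and IH: "\<And>e. e \<notin> valid \<tau> \<Longrightarrow> dangling \<tau> e"
    and invalid: "e \<notin> valid (\<tau> @ [act])"
  shows "dangling (\<tau> @ [act]) e"
proof -
  let ?h = "heap_of \<tau>"
  have run': "\<tau> \<in> sem_gc P" using run sem_gc_appendD by blast
  obtain b v where choice: "choice act = Some (b, v)" and fresh: "b \<notin> adrs ?h"
    using sem_gc_snoc_enabled[OF run] malloc by auto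
  have old: "e \<notin> valid \<tau>" "e \<noteq> PV x" using invalid malloc by auto
  have "e \<noteq> Nxt b j" for j
    using IH[OF old(1)] fresh freed_in_adrs[OF run'] in_adrsI by (fastforce simp: dangling_def)
  then have "pval (step ?h act) e = pval ?h e"
    using old malloc choice by (auto simp: step_def split: pexp.splits)
  then show ?thesis using IH[OF old(1)] dangling_snoc_unchanged[of \<tau> act e] by simp
qed

lemma dangling_snoc:
  assumes run: "\<tau> @ [act] \<in> sem_gc P" and no_race: "\<not> pointer_race \<tau> act"
    and IH: "\<And>e. e \<notin> valid \<tau> \<Longrightarrow> dangling \<tau> e"
    and invalid: "e \<notin> valid (\<tau> @ [act])"
  shows "dangling (\<tau> @ [act]) e"
proof -
  let ?h = "heap_of \<tau>"
  have run': "\<tau> \<in> sem_gc P" using run sem_gc_appendD by blast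
  have wf: "wf_heap ?h" using wf_heap_sem_gc[OF run'] .
  have enabled: "enabled_cmd ?h (acmd act) (choice act)" using run sem_gc_snoc_enabled by blast
  have unchanged: "dangling (\<tau> @ [act]) e"
    if "e \<notin> valid \<tau>" "pval (step ?h act) e = pval ?h e"
    using that IH dangling_snoc_unchanged[of \<tau> act e] by simp
  have copied: "dangling (\<tau> @ [act]) e"
    if "e' \<notin> valid \<tau>" "pval (step ?h act) e = pval ?h e'" "\<not> (\<exists>b i. e' = Nxt b i \<and> freed \<tau> b)"
    for e'
    using that IH[of e'] dangling_snoc_copy[of \<tau> act e e'] by simp
  show ?thesis
  proof (cases "acmd act")
    case (Free x)
    then show ?thesis using IH invalid by (rule dangling_snoc_Free)
  next
    case (Malloc x)
    with run show ?thesis using IH invalid by (rule dangling_snoc_Malloc)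
  next
    case (Asgn x y)
    show ?thesis
    proof (cases "e = PV x")
      case True
      then have "PV y \<notin> valid \<tau>" using invalid Asgn by (auto split: if_splits)
      then show ?thesis using True Asgn copied[of "PV y"] by (simp add: step_def)
    next
      case False
      then show ?thesis using Asgn invalid unchanged by (auto simp: step_def split: if_splits)
    qed
  next
    case (RdNext y x i)
    have valid_x: "PV x \<in> valid \<tau>" using no_race RdNext by (auto simp: pointer_race_def)
    obtain c where c: "pval ?h (PV x) = Some (Adr c)"
      using enabled RdNext wf_heap_deref_Adr[OF wf, of x] by auto
    show ?thesis
    proof (cases "e = PV y")
      case True
      then have "Nxt c i \<notin> valid \<tau>" using invalid RdNext valid_x c by (auto split: if_splits)
      moreover have "\<not> freed \<tau> c" using valid_not_freed[OF run' valid_x] c by blast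
      ultimately show ?thesis using True RdNext c copied[of "Nxt c i"] by (simp add: step_def)
    next
      case False
      then show ?thesis using RdNext c invalid unchanged by (auto simp: step_def split: if_splits)
    qed
  next
    case (WrNext x i y)
    obtain c where c: "pval ?h (PV x) = Some (Adr c)"
      using enabled WrNext wf_heap_deref_Adr[OF wf, of x] by auto
    show ?thesis
    proof (cases "e = Nxt c i")
      case True
      then have "PV y \<notin> valid \<tau>" using invalid WrNext c by (auto split: if_splits)
      then show ?thesis using True WrNext c copied[of "PV y"] by (simp add: step_def)
    next
      case False
      then show ?thesis using WrNext c invalid unchanged by (auto simp: step_def split: if_splits)
    qed
  qed (use invalid unchanged in \<open>auto simp: step_def split: option.splits adr.splits\<close>)
qed

lemma invalid_dangling:
  "\<tau> \<in> sem_gc P \<Longrightarrow> race_free \<tau> \<Longrightarrow> e \<notin> valid \<tau> \<Longrightarrow> dangling \<tau> e"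
proof (induction \<tau> arbitrary: e rule: rev_induct)
  case (snoc act \<tau>)
  then show ?case using dangling_snoc sem_gc_appendD by (metis race_free_snoc)
qed simp

section \<open>Races are exactly accesses through references to freed cells\<close>

lemma freed_reference_races:
  "\<tau> \<in> sem_gc P \<Longrightarrow> freed \<tau> a \<Longrightarrow> pval (heap_of \<tau>) (PV y) = Some (Adr a)
    \<Longrightarrow> y \<in> race_vars (acmd act) \<Longrightarrow> pointer_race \<tau> act"
  using valid_not_freed unfolding pointer_race_def by blast

lemma first_race_references_freed:
  assumes "\<tau> \<in> sem_gc P" "race_free \<tau>" "pointer_race \<tau> act"
  obtains y a where "y \<in> race_vars (acmd act)" "pval (heap_of \<tau>) (PV y) = Some (Adr a)" "freed \<tau> a"
proof -
  obtain y where "y \<in> race_vars (acmd act)" "PV y \<notin> valid \<tau>"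
    using assms(3) by (auto simp: pointer_race_def)
  moreover from this(2) have "dangling \<tau> (PV y)"
    using invalid_dangling assms(1,2) by blast
  ultimately show ?thesis using that by (auto simp: dangling_def)
qed

definition access_after_free :: "('t, 'l, 'p, 'd, 'v) program \<Rightarrow> bool" where
  "access_after_free P \<longleftrightarrow> (\<exists>\<sigma>1 act1 \<sigma>2 act2 x y a.
          \<sigma>1 @ [act1] @ \<sigma>2 @ [act2] \<in> sem_gc P
        \<and> acmd act1 = Free x \<and> pval (heap_of \<sigma>1) (PV x) = Some (Adr a)
        \<and> y \<in> race_vars (acmd act2)
        \<and> pval (heap_of (\<sigma>1 @ [act1] @ \<sigma>2)) (PV y) = Some (Adr a))"

lemma access_after_free_not_PRF:
  assumes "access_after_free P"
  shows "\<not> PRF (sem_gc P)"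
proof -
  obtain \<sigma>1 act1 \<sigma>2 act2 x y a where run: "(\<sigma>1 @ [act1] @ \<sigma>2) @ [act2] \<in> sem_gc P"
    and free: "acmd act1 = Free x" "pval (heap_of \<sigma>1) (PV x) = Some (Adr a)"
    and y: "y \<in> race_vars (acmd act2)" "pval (heap_of (\<sigma>1 @ [act1] @ \<sigma>2)) (PV y) = Some (Adr a)"
    using assms unfolding access_after_free_def by auto
  let ?\<tau> = "\<sigma>1 @ [act1] @ \<sigma>2"
  have "freed ?\<tau> a" unfolding freed_def using free by blast
  then have "pointer_race ?\<tau> act2"
    using freed_reference_races[OF sem_gc_appendD[OF run] _ y(2,1)] by blast
  then have "\<not> race_free (?\<tau> @ [act2])" using race_free_snoc by blast
  then show ?thesis using run unfolding PRF_iff_race_free by blast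
qed

lemma not_PRF_access_after_free:
  assumes "\<not> PRF (sem_gc P)"
  shows "access_after_free P"
proof -
  obtain \<sigma> where \<sigma>: "\<sigma> \<in> sem_gc P" "\<not> race_free \<sigma>"
    using assms by (auto simp: PRF_iff_race_free)
  then obtain \<tau> act \<rho> where split: "\<sigma> = (\<tau> @ [act]) @ \<rho>"
    and race: "race_free \<tau>" "pointer_race \<tau> act"
    by (auto elim: first_race)
  have run: "\<tau> @ [act] \<in> sem_gc P" using \<sigma>(1) split sem_gc_appendD by blast
  obtain y a where y: "y \<in> race_vars (acmd act)" "pval (heap_of \<tau>) (PV y) = Some (Adr a)"
    and "freed \<tau> a"
    using first_race_references_freed[OF sem_gc_appendD[OF run] race] .
  then obtain \<sigma>1 act1 \<sigma>2 x where \<tau>: "\<tau> = \<sigma>1 @ [act1] @ \<sigma>2"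
    and free: "acmd act1 = Free x" "pval (heap_of \<sigma>1) (PV x) = Some (Adr a)"
    unfolding freed_def by blast
  from run y free show ?thesis unfolding access_after_free_def \<tau> append_assoc by blast
qed

lemma PRF_iff_no_access_after_free: "PRF (sem_gc P) \<longleftrightarrow> \<not> access_after_free P"
  using access_after_free_not_PRF not_PRF_access_after_free by blast

theorem mainTheorem8:
  fixes P :: "('t, 'l, 'p, 'd, 'v) program"
  assumes "wf_program P"
  shows "PRF (sem_gc P) \<longleftrightarrow>
    \<not> (\<exists>\<sigma>1 act1 \<sigma>2 act2 x y a.
          \<sigma>1 @ [act1] @ \<sigma>2 @ [act2] \<in> sem_gc P
        \<and> acmd act1 = Free x \<and> pval (heap_of \<sigma>1) (PV x) = Some (Adr a)
        \<and> y \<in> race_vars (acmd act2)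
        \<and> pval (heap_of (\<sigma>1 @ [act1] @ \<sigma>2)) (PV y) = Some (Adr a))"
  using PRF_iff_no_access_after_free unfolding access_after_free_def .

end
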